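(* Let $d,k$ be integers with $2 \leq d \leq \frac{k+1}{2}$, let $\Sigma_k=\{\sigma_1,\ldots,\sigma_k\}$ and $\Sigma_d=\{\sigma_1,\ldots,\sigma_d\}$. Consider two users over the alphabet $\Sigma_k$, where user 1 has confusion graph $G_1=(\Sigma_k,\{ab \mid a\in\Sigma_k,\ b\in\Sigma_k\setminus\Sigma_d,\ a\neq b\})$ and user 2 has the complement confusion graph $G_2=\overline{G_1}=(\Sigma_k,\{ab\mid a,b\in\Sigma_d,\ a\neq b\})$. Then for every $\alpha\in[0,1]$ the rate vector $(\alpha\log_2 d,\ (1-\alpha)\log_2(k-d+1))$ is optimal.
   Context: Setting: a sender broadcasts a word of length $n$ over a finite alphabet $\Sigma$ to $r$ users; user $i$ has a confusion graph $G_i$ on vertex set $\Sigma$, where $ab$ is an edge iff user $i$ cannot distinguish letters $a$ and $b$. Two words $x,y\in\Sigma^n$ are distinguishable by user $i$ if there is a coordinate $t$ with $x_t\neq y_t$ and $x_ty_t$ not an edge of $G_i$. A vector $(m_1,\ldots,m_r)$ of positive integers is feasible for length $n$ if there is a map $E:[m_1]\times\cdots\times[m_r]\to\Sigma^n$ such that for every $i$ and all tuples $a,a'$ with $a_i\neq a'_i$, the words $E(a)$ and $E(a')$ are distinguishable by user $i$. A rate vector $(R_1,\ldots,R_r)$ is feasible if there is a sequence of feasible vectors $(m_1^{(n)},\ldots,m_r^{(n)})$ for lengths $n\to\infty$ with $R_i=\lim_{n\to\infty}\frac{\log_2 m_i^{(n)}}{n}$ for all $i$. For two users, a rate vector is optimal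 if it is feasible and no user can increase his rate while the other user keeps the same rate. *)

theory Defs
  imports Complex_Main
begin

text \<open>Users are indexed 0..r-1; message tuples are functions a :: nat => nat with
  a i < m i for i < r (i.e. [m_i] = {0..<m_i}) and a i = 0 for i >= r.\<close>

definition words :: "'a set \<Rightarrow> nat \<Rightarrow> 'a list set" where
  "words Alph n = {x. length x = n \<and> set x \<subseteq> Alph}"

definition distinguishable :: "('a \<Rightarrow> 'a \<Rightarrow> bool) \<Rightarrow> 'a list \<Rightarrow> 'a list \<Rightarrow> bool" where
  "distinguishable G x y \<longleftrightarrow>
     (\<exists>t < min (length x) (length y). x ! t \<noteq> y ! t \<and> \<not> G (x ! t) (y ! t))"

definition msg_tuples :: "nat \<Rightarrow> (nat \<Rightarrow> nat) \<Rightarrow> (nat \<Rightarrow> nat) set" where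
  "msg_tuples r m = {a. (\<forall>i<r. a i < m i) \<and> (\<forall>i\<ge>r. a i = 0)}"

definition feasible_vector ::
  "'a set \<Rightarrow> (nat \<Rightarrow> 'a \<Rightarrow> 'a \<Rightarrow> bool) \<Rightarrow> nat \<Rightarrow> nat \<Rightarrow> (nat \<Rightarrow> nat) \<Rightarrow> bool" where
  "feasible_vector Alph G r n m \<longleftrightarrow>
     (\<forall>i<r. m i \<ge> 1) \<and>
     (\<exists>E. (\<forall>a\<in>msg_tuples r m. E a \<in> words Alph n) \<and>
          (\<forall>i<r. \<forall>a\<in>msg_tuples r m. \<forall>a'\<in>msg_tuples r m.
              a i \<noteq> a' i \<longrightarrow> distinguishable (G i) (E a) (E a')))"

definition feasible_rate ::
  "'a set \<Rightarrow> (nat \<Rightarrow> 'a \<Rightarrow> 'a \<Rightarrow> bool) \<Rightarrow> nat \<Rightarrow> (nat \<Rightarrow> real) \<Rightarrow> bool" where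
  "feasible_rate Alph G r R \<longleftrightarrow>
     (\<exists>m :: nat \<Rightarrow> nat \<Rightarrow> nat.
        (\<forall>\<^sub>F n in sequentially. feasible_vector Alph G r n (m n)) \<and>
        (\<forall>i<r. (\<lambda>n. log 2 (real (m n i)) / real n) \<longlonglongrightarrow> R i))"

definition two_users :: "('a \<Rightarrow> 'a \<Rightarrow> bool) \<Rightarrow> ('a \<Rightarrow> 'a \<Rightarrow> bool) \<Rightarrow> nat \<Rightarrow> 'a \<Rightarrow> 'a \<Rightarrow> bool" where
  "two_users G1 G2 = (\<lambda>i. if i = 0 then G1 else G2)"

definition rate2 :: "real \<Rightarrow> real \<Rightarrow> nat \<Rightarrow> real" where
  "rate2 R1 R2 = (\<lambda>i. if i = 0 then R1 else R2)"

definition optimal2 ::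
  "'a set \<Rightarrow> ('a \<Rightarrow> 'a \<Rightarrow> bool) \<Rightarrow> ('a \<Rightarrow> 'a \<Rightarrow> bool) \<Rightarrow> real \<Rightarrow> real \<Rightarrow> bool" where
  "optimal2 Alph G1 G2 R1 R2 \<longleftrightarrow>
     feasible_rate Alph (two_users G1 G2) 2 (rate2 R1 R2) \<and>
     \<not> (\<exists>R1'. R1' > R1 \<and> feasible_rate Alph (two_users G1 G2) 2 (rate2 R1' R2)) \<and>
     \<not> (\<exists>R2'. R2' > R2 \<and> feasible_rate Alph (two_users G1 G2) 2 (rate2 R1 R2'))"

text \<open>Alphabet Sigma_k = {1..k} (sigma_i represented by i), Sigma_d = {1..d}.\<close>

definition G1_graph :: "nat \<Rightarrow> nat \<Rightarrow> nat \<Rightarrow> nat \<Rightarrow> bool" where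
  "G1_graph k d a b \<longleftrightarrow> a \<in> {1..k} \<and> b \<in> {1..k} \<and> a \<noteq> b \<and>
      (a \<in> {1..k} - {1..d} \<or> b \<in> {1..k} - {1..d})"

definition G2_graph :: "nat \<Rightarrow> nat \<Rightarrow> nat \<Rightarrow> bool" where
  "G2_graph d a b \<longleftrightarrow> a \<in> {1..d} \<and> b \<in> {1..d} \<and> a \<noteq> b"

end

theory Submission
  imports Defs "HOL-Analysis.Convex"
begin

text \<open>Achievability is time sharing: about \<open>\<alpha>n\<close> letters carry user 1's message in base \<open>d\<close>
  over \<open>\<Sigma>\<^sub>d\<close>, the others carry user 2's message in base \<open>k-d+1\<close> over
  \<open>{\<sigma>\<^sub>1} \<union> (\<Sigma>\<^sub>k - \<Sigma>\<^sub>d)\<close>, whose letters user 2 tells apart pairwise.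

  For the converse let \<open>g = log d / log (k-d+1)\<close>, so \<open>0 < g \<le> 1\<close>. A word \<open>z\<close> over
  \<open>\<Sigma>\<^sub>d\<close> covers \<open>x\<close> if it agrees with \<open>x\<close> wherever \<open>x\<close> has a letter of \<open>\<Sigma>\<^sub>d\<close>.
  Two codewords user 1 can tell apart have no common cover, so the covers of the rows of a
  code (codewords sharing user 1's message) are disjoint subsets of \<open>\<Sigma>\<^sub>d\<^sup>n\<close>. User 2 only
  sees the letters outside \<open>\<Sigma>\<^sub>d\<close>, so a row of size \<open>m\<^sub>2\<close> stays of size \<open>m\<^sub>2\<close> after
  collapsing \<open>\<Sigma>\<^sub>d\<close> to a single letter, and an induction on \<open>n\<close> driven by the concavity of
  \<open>x\<^sup>g\<close> shows that such a set has at least \<open>m\<^sub>2\<^sup>g\<close> covers. Hence \<open>m\<^sub>1 m\<^sub>2\<^sup>g \<le> d\<^sup>n\<close>, i.e.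
  \<open>R\<^sub>1 + g R\<^sub>2 \<le> log d\<close>: every feasible rate lies below the line through the two corners
  \<open>(log d, 0)\<close> and \<open>(0, log (k-d+1))\<close>, on which the time-sharing rates lie.\<close>

section \<open>Concavity of real powers\<close>

lemma concave_on_powr:
  fixes p :: real
  assumes p: "0 < p" "p \<le> 1"
  shows "concave_on {0..} (\<lambda>x. x powr p)"
proof -
  have pos: "concave_on {0<..} (\<lambda>x. x powr p)"
  proof (rule f''_le0_imp_concave[where f' = "\<lambda>x. p * x powr (p - 1)"
        and f'' = "\<lambda>x. p * ((p - 1) * x powr (p - 1 - 1))"])
    fix x :: real assume x: "x \<in> {0<..}"
    show "((\<lambda>x. x powr p) has_real_derivative p * x powr (p - 1)) (at x)"
      using x by (auto intro!: derivative_eq_intros)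
    show "((\<lambda>x. p * x powr (p - 1)) has_real_derivative p * ((p - 1) * x powr (p - 1 - 1))) (at x)"
      using x by (auto intro!: derivative_eq_intros)
    have "(p - 1) * x powr (p - 1 - 1) \<le> 0" using p by (simp add: mult_nonpos_nonneg)
    then show "p * ((p - 1) * x powr (p - 1 - 1)) \<le> 0" using p by (simp add: mult_nonneg_nonpos)
  qed simp
  show ?thesis
  proof (rule concave_on_linorderI)
    fix t x y :: real
    assume t: "0 < t" "t < 1" and xy: "x \<in> {0..}" "y \<in> {0..}" "x < y"
    show "(1 - t) * x powr p + t * y powr p \<le> ((1 - t) *\<^sub>R x + t *\<^sub>R y) powr p"
    proof (cases "x = 0")
      case True
      have "t powr 1 \<le> t powr p" using p t by (intro powr_mono') auto
      then have "t * y powr p \<le> t powr p * y powr p" using t by (intro mult_right_mono) auto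
      then show ?thesis using True t xy by (simp add: powr_mult)
    next
      case False
      then show ?thesis using concave_onD[OF pos, of t x y] t xy by simp
    qed
  qed simp
qed

lemma concave_on_increment_antimono:
  fixes f :: "real \<Rightarrow> real"
  assumes f: "concave_on I f" and I: "s \<in> I" "t + c \<in> I" and "s \<le> t" "0 \<le> c"
  shows "f (t + c) - f t \<le> f (s + c) - f s"
proof (cases "t - s + c = 0")
  case True
  then have "t = s" "c = 0" using assms by auto
  then show ?thesis by simp
next
  case False
  then have D: "0 < t - s + c" using assms by simp
  define l where "l = (t - s) / (t - s + c)"
  \<comment> \<open>\<open>t\<close> and \<open>s + c\<close> are the combinations of \<open>s\<close> and \<open>t + c\<close> with swapped weights \<open>1 - l, l\<close>.\<close>
  have l: "0 \<le> l" "l \<le> 1" "l * (t - s + c) = t - s" using assms D by (auto simp: l_def)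
  have "(1 - l) * f (t + c) + l * f s \<le> f ((1 - l) *\<^sub>R (t + c) + l *\<^sub>R s)"
    using concave_onD[OF f l(1,2) I(2,1)] .
  also have "(1 - l) *\<^sub>R (t + c) + l *\<^sub>R s = s + c" using l(3) by (simp add: algebra_simps)
  finally have 1: "(1 - l) * f (t + c) + l * f s \<le> f (s + c)" .
  have "(1 - l) * f s + l * f (t + c) \<le> f ((1 - l) *\<^sub>R s + l *\<^sub>R (t + c))"
    using concave_onD[OF f l(1,2) I] .
  also have "(1 - l) *\<^sub>R s + l *\<^sub>R (t + c) = t" using l(3) by (simp add: algebra_simps)
  finally have 2: "(1 - l) * f s + l * f (t + c) \<le> f t" .
  show ?thesis using 1 2 by (simp add: algebra_simps)
qed

lemma concave_on_sum_concentrate_le: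
  fixes f :: "real \<Rightarrow> real" and u :: "'a \<Rightarrow> real"
  assumes f: "concave_on {0..} f" and S: "finite S" "S \<noteq> {}"
    and b: "\<And>v. v \<in> S \<Longrightarrow> b \<le> u v" "0 \<le> b"
  shows "f (sum u S - (real (card S) - 1) * b) + (real (card S) - 1) * f b \<le> (\<Sum>v\<in>S. f (u v))"
  using S b(1)
proof (induction S rule: finite_ne_induct)
  case (singleton x)
  then show ?case by simp
next
  case (insert x F)
  define X where "X = sum u F - (real (card F) - 1) * b"
  have "real (card F) * b \<le> sum u F"
    using insert sum_mono[of F "\<lambda>_. b" u] by auto
  then have Xb: "b \<le> X" by (simp add: X_def algebra_simps)
  have step: "f (X + (u x - b)) - f X \<le> f (b + (u x - b)) - f b"
    using concave_on_increment_antimono[OF f, of b X "u x - b"] Xb b insert.prems by simp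
  have IH: "f X + (real (card F) - 1) * f b \<le> (\<Sum>v\<in>F. f (u v))"
    using insert by (simp add: X_def)
  have "sum u (insert x F) - (real (card (insert x F)) - 1) * b = X + (u x - b)"
    using insert by (simp add: X_def algebra_simps)
  moreover have "real (card (insert x F)) - 1 = real (card F)" using insert by simp
  moreover have "(\<Sum>v\<in>insert x F. f (u v)) = f (u x) + (\<Sum>v\<in>F. f (u v))" using insert by simp
  ultimately show ?case using step IH by (simp only:) (simp add: algebra_simps)
qed

lemma concave_on_sum_shift_le:
  fixes f :: "real \<Rightarrow> real" and u :: "'a \<Rightarrow> real"
  assumes f: "concave_on {0..} f" and S: "finite S" "S \<noteq> {}"
    and b: "\<And>v. v \<in> S \<Longrightarrow> b \<le> u v" "0 \<le> b"
    and q: "1 \<le> q" "f (q * b) = real (card S) * f b"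
  shows "f (sum u S + (q - real (card S)) * b) \<le> (\<Sum>v\<in>S. f (u v))"
proof -
  define X where "X = sum u S - (real (card S) - 1) * b"
  have "real (card S) * b \<le> sum u S"
    using b sum_mono[of S "\<lambda>_. b" u] by auto
  then have Xb: "b \<le> X" by (simp add: X_def algebra_simps)
  have "f (X + (q - 1) * b) - f X \<le> f (b + (q - 1) * b) - f b"
    using concave_on_increment_antimono[OF f, of b X "(q - 1) * b"] Xb b q by simp
  moreover have "b + (q - 1) * b = q * b" by (simp add: algebra_simps)
  moreover have "X + (q - 1) * b = sum u S + (q - real (card S)) * b"
    by (simp add: X_def algebra_simps)
  ultimately show ?thesis
    using concave_on_sum_concentrate_le[OF f S, of b u] b q(2) by (simp add: X_def algebra_simps)
qed

section \<open>Covers and shadows\<close>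

lemma words_Suc:
  "x \<in> words A (Suc n) \<longleftrightarrow> (\<exists>c y. x = c # y \<and> c \<in> A \<and> y \<in> words A n)"
  by (cases x) (auto simp: words_def)

lemma finite_words: "finite A \<Longrightarrow> finite (words A n)"
  using finite_lists_length_eq[of A n] by (simp add: words_def conj_commute)

lemma card_words: "finite A \<Longrightarrow> card (words A n) = card A ^ n"
  using card_lists_length_eq[of A n] by (simp add: words_def conj_commute)

lemma words_nth: "x \<in> words A n \<Longrightarrow> t < n \<Longrightarrow> x ! t \<in> A"
  by (auto simp: words_def)

text \<open>Letter \<open>\<sigma>\<^sub>i\<close> is the number \<open>i\<close>; \<open>collapse d\<close> is what user 2 sees of a letter, all of
  \<open>\<Sigma>\<^sub>d\<close> becoming the fresh letter \<open>0\<close>.\<close>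

fun covers :: "nat \<Rightarrow> nat list \<Rightarrow> nat list \<Rightarrow> bool" where
  "covers d [] [] = True"
| "covers d (v # z) (c # x) = (v \<in> {1..d} \<and> (c \<in> {1..d} \<longrightarrow> v = c) \<and> covers d z x)"
| "covers d _ _ = False"

definition shadow :: "nat \<Rightarrow> nat list set \<Rightarrow> nat list set" where
  "shadow d T = {z. \<exists>x\<in>T. covers d z x}"

definition collapse :: "nat \<Rightarrow> nat \<Rightarrow> nat" where
  "collapse d c = (if c \<in> {1..d} then 0 else c)"

definition tails :: "'a list set \<Rightarrow> 'a \<Rightarrow> 'a list set" where
  "tails T v = {x. v # x \<in> T}"

definition hidden_tails :: "nat \<Rightarrow> nat list set \<Rightarrow> nat list set" where
  "hidden_tails d T = {x. \<exists>c. c # x \<in> T \<and> c \<notin> {1..d}}"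

lemma covers_imp_words: "covers d z x \<Longrightarrow> z \<in> words {1..d} (length x)"
  by (induction d z x rule: covers.induct) (auto simp: words_def)

lemma covers_nth:
  "covers d z x \<Longrightarrow> t < length x \<Longrightarrow> x ! t \<in> {1..d} \<Longrightarrow> z ! t = x ! t"
proof (induction d z x arbitrary: t rule: covers.induct)
  case (2 d v z c x)
  then show ?case by (cases t) auto
qed auto

lemma shadow_subset_words: "T \<subseteq> words A n \<Longrightarrow> shadow d T \<subseteq> words {1..d} n"
  using covers_imp_words by (fastforce simp: shadow_def words_def)

lemma finite_shadow: "T \<subseteq> words A n \<Longrightarrow> finite (shadow d T)"
  by (rule finite_subset[OF shadow_subset_words finite_words]) auto

lemma tails_subset_words:
  "T \<subseteq> words A (Suc n) \<Longrightarrow> tails T v \<union> hidden_tails d T \<subseteq> words A n"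
  by (fastforce simp: tails_def hidden_tails_def words_def)

lemma shadow_Nil: "shadow d {[]} = {[]}"
  by (auto simp: shadow_def elim: covers.elims)

lemma shadow_Cons:
  assumes "[] \<notin> T"
  shows "shadow d T = (\<Union>v\<in>{1..d}. Cons v ` shadow d (tails T v \<union> hidden_tails d T))"
proof (intro equalityI subsetI)
  fix z assume "z \<in> shadow d T"
  then obtain x where x: "x \<in> T" "covers d z x" by (auto simp: shadow_def)
  then obtain c y v z' where "x = c # y" "z = v # z'"
    using assms by (cases x; cases z) auto
  moreover from this x have "y \<in> tails T v \<union> hidden_tails d T"
    by (cases "c \<in> {1..d}") (auto simp: tails_def hidden_tails_def)
  ultimately have "v \<in> {1..d}" "z = v # z'" "z' \<in> shadow d (tails T v \<union> hidden_tails d T)"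
    using x by (auto simp: shadow_def)
  then show "z \<in> (\<Union>v\<in>{1..d}. Cons v ` shadow d (tails T v \<union> hidden_tails d T))"
    by blast
next
  fix z assume "z \<in> (\<Union>v\<in>{1..d}. Cons v ` shadow d (tails T v \<union> hidden_tails d T))"
  then obtain v z' y where "v \<in> {1..d}" "z = v # z'" "covers d z' y"
    "y \<in> tails T v \<union> hidden_tails d T"
    by (auto simp: shadow_def)
  then show "z \<in> shadow d T"
    by (auto simp: shadow_def tails_def hidden_tails_def intro: bexI[rotated])
qed

lemma card_shadow_Cons:
  assumes "T \<subseteq> words A (Suc n)"
  shows "card (shadow d T) = (\<Sum>v\<in>{1..d}. card (shadow d (tails T v \<union> hidden_tails d T)))"
proof -
  have "[] \<notin> T" using assms by (auto simp: words_def)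
  then have "card (shadow d T)
      = card (\<Union>v\<in>{1..d}. Cons v ` shadow d (tails T v \<union> hidden_tails d T))"
    by (simp add: shadow_Cons)
  also have "\<dots> = (\<Sum>v\<in>{1..d}. card (Cons v ` shadow d (tails T v \<union> hidden_tails d T)))"
    by (rule card_UN_disjoint) (use finite_shadow[OF tails_subset_words[OF assms]] in auto)
  also have "\<dots> = (\<Sum>v\<in>{1..d}. card (shadow d (tails T v \<union> hidden_tails d T)))"
    by (intro sum.cong refl card_image) auto
  finally show ?thesis .
qed

lemma card_UN_le_sum_card_Un:
  assumes "finite I" "finite B" "\<And>i. i \<in> I \<Longrightarrow> finite (A i)"
  shows "real (card (\<Union>i\<in>I. A i)) + (real (card I) - 1) * real (card B)
    \<le> (\<Sum>i\<in>I. real (card (A i \<union> B)))"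
proof -
  have "card (\<Union>i\<in>I. A i) \<le> card (B \<union> (\<Union>i\<in>I. A i \<union> B - B))"
    by (rule card_mono) (use assms in \<open>auto simp del: Un_Diff_cancel2\<close>)
  also have "\<dots> \<le> card B + card (\<Union>i\<in>I. A i \<union> B - B)" by (rule card_Un_le)
  also have "card (\<Union>i\<in>I. A i \<union> B - B) \<le> (\<Sum>i\<in>I. card (A i \<union> B - B))"
    by (rule card_UN_le) (rule assms)
  finally have "real (card (\<Union>i\<in>I. A i)) \<le> real (card B + (\<Sum>i\<in>I. card (A i \<union> B - B)))"
    by (simp only: of_nat_le_iff)
  also have "\<dots> = real (card B) + (\<Sum>i\<in>I. real (card (A i \<union> B - B)))"
    by simp
  also have "(\<Sum>i\<in>I. real (card (A i \<union> B - B))) = (\<Sum>i\<in>I. real (card (A i \<union> B)) - real (card B))"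
    using assms by (intro sum.cong refl) (simp add: card_Diff_subset card_mono of_nat_diff)
  finally show ?thesis by (simp add: sum_subtractf algebra_simps)
qed

lemma collapse_Cons_subset:
  assumes "T \<subseteq> words {1..k} (Suc n)"
  shows "map (collapse d) ` T \<subseteq> Cons 0 ` (\<Union>v\<in>{1..d}. map (collapse d) ` tails T v)
    \<union> (\<Union>c\<in>{d+1..k}. Cons c ` map (collapse d) ` hidden_tails d T)"
proof
  fix w assume "w \<in> map (collapse d) ` T"
  then obtain c y where cy: "c # y \<in> T" "c \<in> {1..k}" "w = map (collapse d) (c # y)"
    using assms by (force simp: words_Suc)
  show "w \<in> Cons 0 ` (\<Union>v\<in>{1..d}. map (collapse d) ` tails T v)
    \<union> (\<Union>c\<in>{d+1..k}. Cons c ` map (collapse d) ` hidden_tails d T)"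
  proof (cases "c \<in> {1..d}")
    case True
    then have "map (collapse d) y \<in> (\<Union>v\<in>{1..d}. map (collapse d) ` tails T v)"
      using cy by (auto simp: tails_def)
    moreover have "w = 0 # map (collapse d) y" using True cy by (simp add: collapse_def)
    ultimately show ?thesis by blast
  next
    case False
    then have "map (collapse d) y \<in> map (collapse d) ` hidden_tails d T" "c \<in> {d+1..k}"
      using cy by (auto simp: hidden_tails_def)
    moreover have "w = c # map (collapse d) y" using False cy by (simp add: collapse_def)
    ultimately show ?thesis by blast
  qed
qed

lemma card_collapse_Cons_le:
  assumes "T \<subseteq> words {1..k} (Suc n)"
  shows "card (map (collapse d) ` T)
    \<le> card (\<Union>v\<in>{1..d}. map (collapse d) ` tails T v) + (k - d) * card (map (collapse d) ` hidden_tails d T)"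
proof -
  have "finite (tails T v \<union> hidden_tails d T)" for v
    using finite_words[of "{1..k}" n] tails_subset_words[OF assms] by (blast intro: finite_subset)
  then have fin: "finite (map (collapse d) ` tails T v)" "finite (map (collapse d) ` hidden_tails d T)" for v
    by auto
  have "card (map (collapse d) ` T) \<le> card (Cons 0 ` (\<Union>v\<in>{1..d}. map (collapse d) ` tails T v)
      \<union> (\<Union>c\<in>{d+1..k}. Cons c ` map (collapse d) ` hidden_tails d T))"
    by (rule card_mono[OF _ collapse_Cons_subset[OF assms]]) (use fin in auto)
  also have "\<dots> \<le> card (Cons 0 ` (\<Union>v\<in>{1..d}. map (collapse d) ` tails T v))
      + card (\<Union>c\<in>{d+1..k}. Cons c ` map (collapse d) ` hidden_tails d T)"
    by (rule card_Un_le)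
  also have "\<dots> \<le> card (\<Union>v\<in>{1..d}. map (collapse d) ` tails T v)
      + (\<Sum>c\<in>{d+1..k}. card (Cons c ` map (collapse d) ` hidden_tails d T))"
    by (intro add_mono card_image_le card_UN_le) (use fin in auto)
  also have "(\<Sum>c\<in>{d+1..k}. card (Cons c ` map (collapse d) ` hidden_tails d T))
      = (k - d) * card (map (collapse d) ` hidden_tails d T)"
    by (simp add: card_image)
  finally show ?thesis .
qed

lemma card_collapse_powr_le_card_shadow:
  fixes g :: real
  assumes g: "0 < g" "g \<le> 1" "real (k - d + 1) powr g = real d" and dk: "1 \<le> d" "d \<le> k"
  shows "T \<subseteq> words {1..k} n \<Longrightarrow> real (card (map (collapse d) ` T)) powr g \<le> real (card (shadow d T))"
proof (induction n arbitrary: T)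
  case 0
  then have "T \<subseteq> {[]}" by (auto simp: words_def)
  then consider "T = {}" | "T = {[]}" by blast
  then show ?case
  proof cases
    case 1
    then show ?thesis by (simp add: shadow_def)
  next
    case 2
    then show ?thesis by (simp add: shadow_Nil)
  qed
next
  case (Suc n)
  define U where "U v = tails T v \<union> hidden_tails d T" for v
  define B where "B = map (collapse d) ` hidden_tails d T"
  define u where "u v = real (card (map (collapse d) ` U v))" for v
  define b where "b = real (card B)"
  have UW: "U v \<subseteq> words {1..k} n" for v
    using tails_subset_words[OF Suc.prems] by (simp add: U_def)
  have finU: "finite (map (collapse d) ` U v)" for v
    using finite_words[of "{1..k}" n] UW by (blast intro: finite_subset)
  have ub: "b \<le> u v" for v
    using finU by (auto simp: b_def u_def B_def U_def intro: card_mono)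
  have "real (card (map (collapse d) ` T))
      \<le> real (card (\<Union>v\<in>{1..d}. map (collapse d) ` tails T v)) + real (k - d) * b"
    using card_collapse_Cons_le[OF Suc.prems, of d] unfolding b_def B_def
    by (metis of_nat_add of_nat_le_iff of_nat_mult)
  moreover have "real (card (\<Union>v\<in>{1..d}. map (collapse d) ` tails T v)) + (real d - 1) * b
      \<le> sum u {1..d}"
    using card_UN_le_sum_card_Un[of "{1..d}" B "\<lambda>v. map (collapse d) ` tails T v"] finU
    by (simp add: u_def U_def b_def B_def image_Un)
  ultimately have count:
    "real (card (map (collapse d) ` T)) \<le> sum u {1..d} + (real (k - d + 1) - real d) * b"
    using dk by (simp add: of_nat_diff algebra_simps)
  have "real (card (map (collapse d) ` T)) powr g
      \<le> (sum u {1..d} + (real (k - d + 1) - real d) * b) powr g"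
    using count g by (intro powr_mono2) auto
  also have "\<dots> \<le> (\<Sum>v\<in>{1..d}. u v powr g)"
    using concave_on_sum_shift_le[OF concave_on_powr[OF g(1,2)], of "{1..d}" b u "real (k - d + 1)"]
      ub g dk by (simp add: powr_mult b_def)
  also have "\<dots> \<le> (\<Sum>v\<in>{1..d}. real (card (shadow d (U v))))"
    using Suc.IH[OF UW] by (intro sum_mono) (simp add: u_def)
  also have "\<dots> = real (card (shadow d T))"
    using card_shadow_Cons[OF Suc.prems] by (simp add: U_def)
  finally show ?case .
qed

section \<open>The converse bound\<close>

lemma msg_tuples_2:
  "a \<in> msg_tuples 2 m \<longleftrightarrow> a 0 < m 0 \<and> a 1 < m 1 \<and> (\<forall>i\<ge>2. a i = 0)"
  by (auto simp: msg_tuples_def less_2_cases_iff)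

lemma feasible_vector_two_users_iff:
  "feasible_vector Alph (two_users G1 G2) 2 n m \<longleftrightarrow>
     1 \<le> m 0 \<and> 1 \<le> m 1 \<and>
     (\<exists>C. (\<forall>i<m 0. \<forall>j<m 1. C i j \<in> words Alph n) \<and>
          (\<forall>i<m 0. \<forall>j<m 1. \<forall>i'<m 0. \<forall>j'<m 1.
              (i \<noteq> i' \<longrightarrow> distinguishable G1 (C i j) (C i' j')) \<and>
              (j \<noteq> j' \<longrightarrow> distinguishable G2 (C i j) (C i' j'))))"
  (is "?lhs \<longleftrightarrow> ?rhs")
proof
  assume ?lhs
  then obtain E where E: "\<forall>a\<in>msg_tuples 2 m. E a \<in> words Alph n"
    "\<forall>l<2. \<forall>a\<in>msg_tuples 2 m. \<forall>a'\<in>msg_tuples 2 m.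
       a l \<noteq> a' l \<longrightarrow> distinguishable (two_users G1 G2 l) (E a) (E a')"
    and m: "\<forall>l<2. 1 \<le> m l"
    by (auto simp: feasible_vector_def)
  define tup :: "nat \<Rightarrow> nat \<Rightarrow> nat \<Rightarrow> nat"
    where "tup i j = (\<lambda>l. if l = 0 then i else if l = 1 then j else 0)" for i j
  have tup: "tup i j \<in> msg_tuples 2 m" if "i < m 0" "j < m 1" for i j
    using that by (simp add: tup_def msg_tuples_2)
  have "distinguishable G1 (E (tup i j)) (E (tup i' j'))"
    if "i < m 0" "j < m 1" "i' < m 0" "j' < m 1" "i \<noteq> i'" for i j i' j'
    using E(2)[rule_format, of 0, OF _ tup[OF that(1,2)] tup[OF that(3,4)]] that(5)
    by (simp add: tup_def two_users_def)
  moreover have "distinguishable G2 (E (tup i j)) (E (tup i' j'))"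
    if "i < m 0" "j < m 1" "i' < m 0" "j' < m 1" "j \<noteq> j'" for i j i' j'
    using E(2)[rule_format, of 1, OF _ tup[OF that(1,2)] tup[OF that(3,4)]] that(5)
    by (simp add: tup_def two_users_def)
  moreover have "E (tup i j) \<in> words Alph n" if "i < m 0" "j < m 1" for i j
    using E(1) tup[OF that] by blast
  ultimately show ?rhs using m by (intro conjI exI[of _ "\<lambda>i j. E (tup i j)"]) auto
next
  assume ?rhs
  then obtain C where m: "1 \<le> m 0" "1 \<le> m 1"
    and C: "\<forall>i<m 0. \<forall>j<m 1. C i j \<in> words Alph n"
    "\<forall>i<m 0. \<forall>j<m 1. \<forall>i'<m 0. \<forall>j'<m 1.
       (i \<noteq> i' \<longrightarrow> distinguishable G1 (C i j) (C i' j')) \<and>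
       (j \<noteq> j' \<longrightarrow> distinguishable G2 (C i j) (C i' j'))"
    by blast
  have "distinguishable (two_users G1 G2 l) (C (a 0) (a 1)) (C (a' 0) (a' 1))"
    if "l < 2" "a \<in> msg_tuples 2 m" "a' \<in> msg_tuples 2 m" "a l \<noteq> a' l" for l a a'
    using that C(2) by (auto simp: msg_tuples_2 two_users_def less_2_cases_iff)
  then show ?lhs using m C(1) unfolding feasible_vector_def
    by (intro conjI exI[of _ "\<lambda>a. C (a 0) (a 1)"]) (auto simp: msg_tuples_2 less_2_cases_iff)
qed

lemma distinguishable_G2_imp_collapse_neq:
  assumes "x \<in> words {1..k} n" "y \<in> words {1..k} n" "distinguishable (G2_graph d) x y"
  shows "map (collapse d) x \<noteq> map (collapse d) y"
proof
  assume eq: "map (collapse d) x = map (collapse d) y"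
  obtain t where t: "t < n" "x ! t \<noteq> y ! t" "\<not> G2_graph d (x ! t) (y ! t)"
    using assms by (auto simp: distinguishable_def words_def)
  have "collapse d (x ! t) = collapse d (y ! t)"
    using arg_cong[OF eq, of "\<lambda>w. w ! t"] t(1) assms(1,2) by (simp add: words_def)
  moreover have "x ! t \<in> {1..k}" "y ! t \<in> {1..k}"
    using words_nth t(1) assms(1,2) by blast+
  ultimately show False using t(2,3) by (auto simp: collapse_def G2_graph_def split: if_splits)
qed

lemma distinguishable_G1_imp_no_common_cover:
  assumes "x \<in> words {1..k} n" "y \<in> words {1..k} n" "distinguishable (G1_graph k d) x y"
    and "covers d z x"
  shows "\<not> covers d z y"
proof
  assume "covers d z y"
  obtain t where t: "t < n" "x ! t \<noteq> y ! t" "\<not> G1_graph k d (x ! t) (y ! t)"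
    using assms by (auto simp: distinguishable_def words_def)
  have "x ! t \<in> {1..k}" "y ! t \<in> {1..k}" using words_nth t(1) assms(1,2) by blast+
  then have "x ! t \<in> {1..d}" "y ! t \<in> {1..d}" using t(2,3) by (auto simp: G1_graph_def)
  moreover have "t < length x" "t < length y" using t(1) assms(1,2) by (auto simp: words_def)
  ultimately have "z ! t = x ! t" "z ! t = y ! t"
    using covers_nth[OF assms(4)] covers_nth[OF \<open>covers d z y\<close>] by blast+
  then show False using t(2) by simp
qed

lemma feasible_vector_bound:
  fixes g :: real
  assumes g: "0 < g" "g \<le> 1" "real (k - d + 1) powr g = real d" and dk: "1 \<le> d" "d \<le> k"
    and F: "feasible_vector {1..k} (two_users (G1_graph k d) (G2_graph d)) 2 n m"
  shows "real (m 0) * real (m 1) powr g \<le> real d ^ n"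
proof -
  obtain C where CW: "\<forall>i<m 0. \<forall>j<m 1. C i j \<in> words {1..k} n"
    and C: "\<forall>i<m 0. \<forall>j<m 1. \<forall>i'<m 0. \<forall>j'<m 1.
       (i \<noteq> i' \<longrightarrow> distinguishable (G1_graph k d) (C i j) (C i' j')) \<and>
       (j \<noteq> j' \<longrightarrow> distinguishable (G2_graph d) (C i j) (C i' j'))"
    using F unfolding feasible_vector_two_users_iff by (elim conjE exE)
  define Row where "Row i = C i ` {..<m 1}" for i
  have RW: "Row i \<subseteq> words {1..k} n" if "i < m 0" for i
    using CW that by (auto simp: Row_def)
  have "inj_on (\<lambda>j. map (collapse d) (C i j)) {..<m 1}" if "i < m 0" for i
  proof (rule inj_onI, rule ccontr)
    fix j j' assume j: "j \<in> {..<m 1}" "j' \<in> {..<m 1}" "j \<noteq> j'"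
      and eq: "map (collapse d) (C i j) = map (collapse d) (C i j')"
    have "distinguishable (G2_graph d) (C i j) (C i j')" using C that j by auto
    then show False using distinguishable_G2_imp_collapse_neq CW that j eq by blast
  qed
  then have "card (map (collapse d) ` Row i) = m 1" if "i < m 0" for i
    using that by (simp add: Row_def image_image card_image)
  then have row: "real (m 1) powr g \<le> real (card (shadow d (Row i)))" if "i < m 0" for i
    using card_collapse_powr_le_card_shadow[OF g dk RW[OF that]] that by simp
  have disj: "shadow d (Row i) \<inter> shadow d (Row i') = {}"
    if "i < m 0" "i' < m 0" "i \<noteq> i'" for i i'
  proof -
    have "\<not> covers d z (C i' j')" if "j < m 1" "j' < m 1" "covers d z (C i j)" for z j j'
      using distinguishable_G1_imp_no_common_cover[of "C i j" k n "C i' j'"] CW C that \<open>i < m 0\<close>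
        \<open>i' < m 0\<close> \<open>i \<noteq> i'\<close> by blast
    then show ?thesis by (auto simp: shadow_def Row_def)
  qed
  have "real (m 0) * real (m 1) powr g \<le> (\<Sum>i<m 0. real (card (shadow d (Row i))))"
    using sum_mono[of "{..<m 0}" "\<lambda>_. real (m 1) powr g"] row by simp
  also have "\<dots> = real (card (\<Union>i<m 0. shadow d (Row i)))"
    by (subst card_UN_disjoint) (auto intro: finite_shadow[OF RW] dest: disj)
  also have "\<dots> \<le> real (card (words {1..d} n))"
    using shadow_subset_words[OF RW] by (intro of_nat_mono card_mono finite_words) auto
  also have "\<dots> = real d ^ n" by (simp add: card_words)
  finally show ?thesis .
qed

lemma feasible_rate_bound:
  fixes g :: real
  assumes g: "0 < g" "g \<le> 1" "real (k - d + 1) powr g = real d" and dk: "1 \<le> d" "d \<le> k"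
    and F: "feasible_rate {1..k} (two_users (G1_graph k d) (G2_graph d)) 2 (rate2 R1 R2)"
  shows "R1 + g * R2 \<le> log 2 (real d)"
proof -
  obtain m where m: "\<forall>\<^sub>F n in sequentially. feasible_vector {1..k} (two_users (G1_graph k d) (G2_graph d)) 2 n (m n)"
    and lim: "\<forall>i<2. (\<lambda>n. log 2 (real (m n i)) / real n) \<longlonglongrightarrow> rate2 R1 R2 i"
    using F unfolding feasible_rate_def by blast
  have "(\<lambda>n. log 2 (real (m n 0)) / real n) \<longlonglongrightarrow> R1" "(\<lambda>n. log 2 (real (m n 1)) / real n) \<longlonglongrightarrow> R2"
    using lim[rule_format, of 0] lim[rule_format, of 1] by (simp_all add: rate2_def)
  then have "(\<lambda>n. log 2 (real (m n 0)) / real n + g * (log 2 (real (m n 1)) / real n)) \<longlonglongrightarrow> R1 + g * R2"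
    by (intro tendsto_intros)
  moreover have "\<forall>\<^sub>F n in sequentially.
      log 2 (real (m n 0)) / real n + g * (log 2 (real (m n 1)) / real n) \<le> log 2 (real d)"
    using m eventually_gt_at_top[of 0]
  proof eventually_elim
    case (elim n)
    have pos: "1 \<le> m n 0" "1 \<le> m n 1" using elim(1) unfolding feasible_vector_def by auto
    have "log 2 (real (m n 0)) + g * log 2 (real (m n 1))
        = log 2 (real (m n 0) * real (m n 1) powr g)"
      using pos by (simp add: log_mult log_powr)
    also have "\<dots> \<le> log 2 (real d ^ n)"
      using feasible_vector_bound[OF g dk elim(1)] pos by (intro log_mono) auto
    also have "\<dots> = real n * log 2 (real d)" by (simp add: log_nat_power)
    finally show ?case using elim(2) by (simp add: field_simps)
  qed
  ultimately show ?thesis by (rule tendsto_upperbound) simp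
qed

lemma feasible_rate_tradeoff:
  assumes "2 \<le> d" "2 * d \<le> k + 1"
    and F: "feasible_rate {1..k} (two_users (G1_graph k d) (G2_graph d)) 2 (rate2 R1 R2)"
  shows "R1 * log 2 (real (k - d + 1)) + R2 * log 2 (real d) \<le> log 2 (real d) * log 2 (real (k - d + 1))"
proof -
  define q where "q = real (k - d + 1)"
  have d: "1 < real d" "real d \<le> q" using assms by (simp_all add: q_def of_nat_diff)
  then have lq: "0 < log 2 q" "log 2 (real d) \<le> log 2 q" by simp_all
  define g where "g = log 2 (real d) / log 2 q"
  have g: "0 < g" "g \<le> 1" using d lq by (simp_all add: g_def)
  have "q powr g = real d"
    using d lq by (simp add: g_def powr_def log_def)
  then have "R1 + g * R2 \<le> log 2 (real d)"
    by (intro feasible_rate_bound[OF g _ _ _ F]) (use assms in \<open>simp_all add: q_def\<close>)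
  then have "(R1 + g * R2) * log 2 q \<le> log 2 (real d) * log 2 q"
    using lq by (intro mult_right_mono) auto
  then show ?thesis using lq unfolding q_def[symmetric] by (simp add: g_def algebra_simps)
qed

section \<open>Time sharing\<close>

lemma exists_digit_neq:
  fixes b len x y :: nat
  assumes "0 < b" "x < b ^ len" "y < b ^ len" "x \<noteq> y"
  shows "\<exists>t<len. x div b ^ t mod b \<noteq> y div b ^ t mod b"
  using assms(2-4)
proof (induction len arbitrary: x y)
  case 0
  then show ?case by simp
next
  case (Suc len)
  show ?case
  proof (cases "x mod b = y mod b")
    case False
    then show ?thesis by (intro exI[of _ 0]) auto
  next
    case True
    then have "x div b \<noteq> y div b"
      using Suc.prems(3) by (metis div_mult_mod_eq)
    moreover have "x div b < b ^ len" "y div b < b ^ len"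
      using Suc.prems(1,2) assms(1) by (auto simp: div_less_iff_less_mult mult.commute)
    ultimately obtain t where "t < len" "x div b div b ^ t mod b \<noteq> y div b div b ^ t mod b"
      using Suc.IH by blast
    then show ?thesis by (intro exI[of _ "Suc t"]) (auto simp: div_mult2_eq)
  qed
qed

definition code :: "nat \<Rightarrow> nat \<Rightarrow> nat \<Rightarrow> nat \<Rightarrow> nat \<Rightarrow> nat \<Rightarrow> nat list" where
  "code d q P N i j =
     map (\<lambda>t. Suc (i div d ^ t mod d)) [0..<P] @
     map (\<lambda>t. let r = j div q ^ t mod q in if r = 0 then 1 else d + r) [0..<N]"

lemma length_code: "length (code d q P N i j) = P + N"
  by (simp add: code_def)

lemma code_nth_left: "t < P \<Longrightarrow> code d q P N i j ! t = Suc (i div d ^ t mod d)"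
  by (simp add: code_def nth_append)

lemma code_nth_right:
  "t < N \<Longrightarrow> code d q P N i j ! (P + t) = (let r = j div q ^ t mod q in if r = 0 then 1 else d + r)"
  by (simp add: code_def nth_append)

lemma code_in_words:
  assumes "1 \<le> d" "d \<le> k"
  shows "code d (k - d + 1) P N i j \<in> words {1..k} (P + N)"
proof -
  have digits: "i div d ^ t mod d < d" "j div (k - d + 1) ^ t mod (k - d + 1) < k - d + 1" for t
    using assms by simp_all
  have "set (code d (k - d + 1) P N i j) \<subseteq> {1..k}"
    unfolding code_def set_append set_map
  proof (intro Un_least image_subsetI)
    show "Suc (i div d ^ t mod d) \<in> {1..k}" for t
      using Suc_leI[OF digits(1)[of t]] assms by (simp only: atLeastAtMost_iff) linarith
    show "(let r = j div (k - d + 1) ^ t mod (k - d + 1) in if r = 0 then 1 else d + r) \<in> {1..k}" for t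
    proof -
      define r where "r = j div (k - d + 1) ^ t mod (k - d + 1)"
      have "r < k - d + 1" unfolding r_def by (rule digits(2))
      then show ?thesis unfolding Let_def r_def[symmetric] using assms by auto
    qed
  qed
  then show ?thesis by (simp add: words_def length_code)
qed

lemma code_distinguishable_G1:
  assumes "1 \<le> d" "i < d ^ P" "i' < d ^ P" "i \<noteq> i'"
  shows "distinguishable (G1_graph k d) (code d q P N i j) (code d q P N i' j')"
proof -
  obtain t where t: "t < P" "i div d ^ t mod d \<noteq> i' div d ^ t mod d"
    using exists_digit_neq[OF _ assms(2-4)] assms(1) by auto
  have "Suc (i div d ^ t mod d) \<le> d" "Suc (i' div d ^ t mod d) \<le> d"
    using assms(1) by (simp_all add: Suc_le_eq)
  then show ?thesis unfolding distinguishable_def using t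
    by (intro exI[of _ t]) (auto simp: length_code code_nth_left G1_graph_def)
qed

lemma code_distinguishable_G2:
  assumes "2 \<le> d" "0 < q" "j < q ^ N" "j' < q ^ N" "j \<noteq> j'"
  shows "distinguishable (G2_graph d) (code d q P N i j) (code d q P N i' j')"
proof -
  obtain t where t: "t < N" "j div q ^ t mod q \<noteq> j' div q ^ t mod q"
    using exists_digit_neq[OF assms(2-5)] by blast
  then show ?thesis unfolding distinguishable_def using assms(1)
    by (intro exI[of _ "P + t"]) (auto simp: length_code code_nth_right G2_graph_def Let_def)
qed

lemma feasible_vector_code:
  assumes "2 \<le> d" "d \<le> k"
  shows "feasible_vector {1..k} (two_users (G1_graph k d) (G2_graph d)) 2 (P + N)
           (\<lambda>l. if l = 0 then d ^ P else (k - d + 1) ^ N)"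
  unfolding feasible_vector_two_users_iff
  using assms code_in_words[of d k P N] code_distinguishable_G1[of d _ P _ k "k - d + 1" N]
    code_distinguishable_G2[of d "k - d + 1" _ N _ P]
  by (intro conjI exI[of _ "code d (k - d + 1) P N"]) auto

lemma tendsto_floor_mult_div:
  fixes \<alpha> :: real
  assumes "0 \<le> \<alpha>"
  shows "(\<lambda>n. real (nat \<lfloor>\<alpha> * real n\<rfloor>) / real n) \<longlonglongrightarrow> \<alpha>"
proof (rule tendsto_sandwich[of "\<lambda>n. \<alpha> - 1 / real n" _ _ "\<lambda>_. \<alpha>"])
  have "\<alpha> - 1 / real n \<le> real (nat \<lfloor>\<alpha> * real n\<rfloor>) / real n \<and> real (nat \<lfloor>\<alpha> * real n\<rfloor>) / real n \<le> \<alpha>"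
    if "0 < n" for n
  proof -
    have "real (nat \<lfloor>\<alpha> * real n\<rfloor>) = of_int \<lfloor>\<alpha> * real n\<rfloor>" using assms by simp
    then have "\<alpha> * real n - 1 \<le> real (nat \<lfloor>\<alpha> * real n\<rfloor>)" "real (nat \<lfloor>\<alpha> * real n\<rfloor>) \<le> \<alpha> * real n"
      by linarith+
    then have "(\<alpha> * real n - 1) / real n \<le> real (nat \<lfloor>\<alpha> * real n\<rfloor>) / real n"
      "real (nat \<lfloor>\<alpha> * real n\<rfloor>) / real n \<le> \<alpha> * real n / real n"
      by (meson divide_right_mono of_nat_0_le_iff)+
    then show ?thesis using that by (simp add: diff_divide_distrib)
  qed
  then show "\<forall>\<^sub>F n in sequentially. \<alpha> - 1 / real n \<le> real (nat \<lfloor>\<alpha> * real n\<rfloor>) / real n"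
    and "\<forall>\<^sub>F n in sequentially. real (nat \<lfloor>\<alpha> * real n\<rfloor>) / real n \<le> \<alpha>"
    by (auto intro: eventually_mono[OF eventually_gt_at_top[of 0]])
  show "(\<lambda>n. \<alpha> - 1 / real n) \<longlonglongrightarrow> \<alpha>"
    using tendsto_diff[OF tendsto_const lim_1_over_n, of \<alpha>] by simp
qed simp

lemma feasible_rate_achievable:
  fixes \<alpha> :: real
  assumes dk: "2 \<le> d" "d \<le> k" and \<alpha>: "0 \<le> \<alpha>" "\<alpha> \<le> 1"
  shows "feasible_rate {1..k} (two_users (G1_graph k d) (G2_graph d)) 2
           (rate2 (\<alpha> * log 2 (real d)) ((1 - \<alpha>) * log 2 (real (k - d + 1))))"
proof -
  define P where "P n = nat \<lfloor>\<alpha> * real n\<rfloor>" for n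
  have P: "P n \<le> n" for n
    using \<alpha> mult_left_le_one_le[of "real n" \<alpha>] by (simp add: P_def nat_le_iff floor_le_iff)
  define m where "m n = (\<lambda>l::nat. if l = 0 then d ^ P n else (k - d + 1) ^ (n - P n))" for n
  have frac: "(\<lambda>n. real (P n) / real n) \<longlonglongrightarrow> \<alpha>"
    unfolding P_def by (rule tendsto_floor_mult_div[OF \<alpha>(1)])
  have "(\<lambda>n. log 2 (real (m n 0)) / real n) = (\<lambda>n. real (P n) / real n * log 2 (real d))"
    by (simp add: m_def log_nat_power)
  then have "(\<lambda>n. log 2 (real (m n 0)) / real n) \<longlonglongrightarrow> \<alpha> * log 2 (real d)"
    using frac by (simp only:) (intro tendsto_intros)
  moreover have "(\<lambda>n. log 2 (real (m n 1)) / real n) \<longlonglongrightarrow> (1 - \<alpha>) * log 2 (real (k - d + 1))"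
  proof (rule Lim_transform_eventually)
    show "(\<lambda>n. (1 - real (P n) / real n) * log 2 (real (k - d + 1))) \<longlonglongrightarrow> (1 - \<alpha>) * log 2 (real (k - d + 1))"
      using frac by (intro tendsto_intros)
    have "(1 - real (P n) / real n) * log 2 (real (k - d + 1)) = log 2 (real (m n 1)) / real n"
      if "0 < n" for n
      using P[of n] that by (simp add: m_def log_nat_power of_nat_diff field_simps del: of_nat_add)
    then show "\<forall>\<^sub>F n in sequentially.
        (1 - real (P n) / real n) * log 2 (real (k - d + 1)) = log 2 (real (m n 1)) / real n"
      by (auto intro: eventually_mono[OF eventually_gt_at_top[of 0]])
  qed
  moreover have "feasible_vector {1..k} (two_users (G1_graph k d) (G2_graph d)) 2 n (m n)" for n
    using feasible_vector_code[OF dk, of "P n" "n - P n"] P[of n] by (simp add: m_def)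
  ultimately show ?thesis unfolding feasible_rate_def
    by (intro exI[of _ m] conjI always_eventually allI) (auto simp: rate2_def less_2_cases_iff)
qed

theorem theorem8:
  fixes d k :: nat and \<alpha> :: real
  assumes "2 \<le> d" and "real d \<le> (real k + 1) / 2"
    and "0 \<le> \<alpha>" and "\<alpha> \<le> 1"
  shows "optimal2 {1..k} (G1_graph k d) (G2_graph d)
           (\<alpha> * log 2 (real d)) ((1 - \<alpha>) * log 2 (real (k - d + 1)))"
proof -
  have "real (2 * d) \<le> real (k + 1)" using assms(2) by simp
  then have dk: "2 * d \<le> k + 1" by (simp only: of_nat_le_iff)
  define a where "a = log 2 (real d)"
  define b where "b = log 2 (real (k - d + 1))"
  have ab: "0 < a" "0 < b" using assms(1) dk by (simp_all add: a_def b_def of_nat_diff)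
  have tradeoff: "R1 * b + R2 * a \<le> a * b"
    if "feasible_rate {1..k} (two_users (G1_graph k d) (G2_graph d)) 2 (rate2 R1 R2)" for R1 R2
    using feasible_rate_tradeoff[OF assms(1) dk that] by (simp add: a_def b_def)
  show ?thesis unfolding optimal2_def a_def[symmetric] b_def[symmetric]
  proof (intro conjI notI)
    show "feasible_rate {1..k} (two_users (G1_graph k d) (G2_graph d)) 2 (rate2 (\<alpha> * a) ((1 - \<alpha>) * b))"
      using feasible_rate_achievable[OF assms(1) _ assms(3,4)] dk by (simp add: a_def b_def)
  next
    assume "\<exists>R1'. \<alpha> * a < R1' \<and>
      feasible_rate {1..k} (two_users (G1_graph k d) (G2_graph d)) 2 (rate2 R1' ((1 - \<alpha>) * b))"
    then obtain R1' where "\<alpha> * a < R1'" "R1' * b + (1 - \<alpha>) * b * a \<le> a * b"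
      using tradeoff by blast
    then show False using mult_strict_right_mono[of "\<alpha> * a" R1' b] ab by (simp add: algebra_simps)
  next
    assume "\<exists>R2'. (1 - \<alpha>) * b < R2' \<and>
      feasible_rate {1..k} (two_users (G1_graph k d) (G2_graph d)) 2 (rate2 (\<alpha> * a) R2')"
    then obtain R2' where "(1 - \<alpha>) * b < R2'" "\<alpha> * a * b + R2' * a \<le> a * b"
      using tradeoff by blast
    then show False using mult_strict_right_mono[of "(1 - \<alpha>) * b" R2' a] ab by (simp add: algebra_simps)
  qed
qed

end
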